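(* Let $n\ge0$ and let $H_n$ be the pyrene system with $n$ pyrene fragments. Then $$F(H_n,x)=x^{n}\sum_{j=0}^{n}\sum_{i=\lceil\frac{j+n}{2}\rceil}^{n}(-1)^{n-i}2^{2i+j-n}\binom{i}{n-i}\binom{2i-n}{j}x^{j}.$$
   Context: Pyrene system: draw the hexagonal lattice so that every hexagon has two vertical sides; horizontally adjacent hexagons then share a vertical edge. For $n\ge1$, $H_n$ is the hexagonal system (the plane graph formed by the vertices and edges of the following $4n$ hexagons) consisting of a horizontal linear row of $2n$ hexagons $h_{1,1},h_{1,2},\dots,h_{n,1},h_{n,2}$, consecutive ones sharing a vertical edge, together with, for each $i$, a hexagon $s_{i,1}$ directly above and a hexagon $s_{i,2}$ directly below the common edge of $h_{i,1}$ and $h_{i,2}$ (each sharing an edge with both $h_{i,1}$ and $h_{i,2}$). $H_0$ is the null graph (with forcing polynomial $1$). For a perfect matching $M$ of $G$, a forcing set is a subset $S\subseteq M$ contained in no other perfect matching of $G$, and the forcing number $f(G,M)$ is the minimum size of a forcing set. The forcing polynomial is $F(G,x)=\sum_{M\in\mathcal{M}(G)}x^{f(G,M)}$, where $\mathcal{M}(G)$ is the set of perfect matchings of $G$. *)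

theory Defs
  imports "HOL-Computational_Algebra.Polynomial"
begin

(* Hexagonal lattice, hexagons with two vertical sides ("pointy-top").
   Integer coordinates in units of half the side length s/2 horizontally scaled so that
   the hexagon with centre (x,y) has vertices
     top (x,y+2), upper-right (x+1,y+1), lower-right (x+1,y-1),
     bottom (x,y-2), lower-left (x-1,y-1), upper-left (x-1,y+1).
   Horizontally adjacent hexagons have centres (x,y), (x+2,y) and share a vertical edge;
   the hexagon directly above (below) their common edge has centre (x+1,y+3) ((x+1,y-3)). *)

type_synonym vert = "int \<times> int"

definition hex_cycle :: "vert \<Rightarrow> vert list" where
  "hex_cycle c = (case c of (x,y) \<Rightarrow>
     [(x,y+2), (x+1,y+1), (x+1,y-1), (x,y-2), (x-1,y-1), (x-1,y+1)])"

definition hex_vertices :: "vert \<Rightarrow> vert set" where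
  "hex_vertices c = set (hex_cycle c)"

definition hex_edges :: "vert \<Rightarrow> vert set set" where
  "hex_edges c = (let vs = hex_cycle c in
     {{vs ! k, vs ! ((k + 1) mod 6)} | k. k < 6})"

(* Centres of the 4n hexagons of the pyrene system H_n (fragment i = 0..n-1):
   h_{i,1} at (4i,0), h_{i,2} at (4i+2,0), s_{i,1} at (4i+1,3), s_{i,2} at (4i+1,-3). *)
definition pyrene_centres :: "nat \<Rightarrow> vert set" where
  "pyrene_centres n = (\<Union>i\<in>{..<n}.
     {(4 * int i, 0), (4 * int i + 2, 0), (4 * int i + 1, 3), (4 * int i + 1, -3)})"

definition pyrene_V :: "nat \<Rightarrow> vert set" where
  "pyrene_V n = (\<Union>c\<in>pyrene_centres n. hex_vertices c)"

definition pyrene_E :: "nat \<Rightarrow> vert set set" where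
  "pyrene_E n = (\<Union>c\<in>pyrene_centres n. hex_edges c)"

definition perfect_matching :: "'a set \<Rightarrow> 'a set set \<Rightarrow> 'a set set \<Rightarrow> bool" where
  "perfect_matching V E M \<longleftrightarrow> M \<subseteq> E \<and> (\<forall>v\<in>V. \<exists>!e. e \<in> M \<and> v \<in> e)"

definition perfect_matchings :: "'a set \<Rightarrow> 'a set set \<Rightarrow> 'a set set set" where
  "perfect_matchings V E = {M. perfect_matching V E M}"

definition forcing_set :: "'a set \<Rightarrow> 'a set set \<Rightarrow> 'a set set \<Rightarrow> 'a set set \<Rightarrow> bool" where
  "forcing_set V E M S \<longleftrightarrow> S \<subseteq> M \<and>
     (\<forall>M'. perfect_matching V E M' \<and> S \<subseteq> M' \<longrightarrow> M' = M)"

definition forcing_number :: "'a set \<Rightarrow> 'a set set \<Rightarrow> 'a set set \<Rightarrow> nat" where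
  "forcing_number V E M = Min (card ` {S. forcing_set V E M S})"

definition forcing_polynomial :: "'a set \<Rightarrow> 'a set set \<Rightarrow> int poly" where
  "forcing_polynomial V E = (\<Sum>M\<in>perfect_matchings V E. monom 1 (forcing_number V E M))"

end

theory Submission
  imports Defs
begin

(* A perfect matching of H_n is described by the n + 1 vertical edges separating consecutive
   pyrene fragments: such an edge lies in the matching, or both of its ends are matched into the
   fragment on its left, or both into the fragment on its right.  The states of the two edges
   bounding a fragment determine the matching inside it, except that when the central edge of
   the fragment is unused, each of the hexagons s_{i,1}, s_{i,2} independently carries one of its
   two perfect matchings.  Each such hexagon can be flipped on its own, so a forcing set meets
   both of them; when the central edge is used, the state of one bounding edge can be changed,
   so a forcing set meets the fragment.  One edge per possible flip already forces the matching,
   hence the forcing number is the sum of these local contributions 2 and 1.  Summing over the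
   states is a transfer-matrix computation whose 2 x 2 matrix has trace 2x + 4x^2 and determinant
   x^2, so F(H_n, x) = x^n U_n(1 + 2x) with U_n the Chebyshev polynomial of the second kind, and
   expanding U_n gives the double sum. *)

section \<open>Labelling the vertices and edges of the pyrene system\<close>

(* Fragment i is the pyrene unit h_{i,1}, h_{i,2}, s_{i,1}, s_{i,2} without the right vertical
   edge of h_{i,2}, which is the edge A12 of fragment i + 1.  Coordinates are relative to the
   centre of h_{i,1}; index 2 is the mirror image of index 1 in the horizontal axis, A1 A2 is the
   left edge of h_{i,1}, C1 C2 the edge shared by h_{i,1} and h_{i,2}, and TA1, TA2 join T1, T2
   to A1, A2 of fragment i + 1. *)
datatype vkind = A1 | A2 | P1 | P2 | Q1 | Q2 | R1 | R2 | S1 | S2 | T1 | T2 | C1 | C2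

datatype ekind = A12 | AP1 | AP2 | PQ1 | PQ2 | QR1 | QR2 | RS1 | RS2 | ST1 | ST2
  | TA1 | TA2 | PC1 | PC2 | CT1 | CT2 | C12

lemma UNIV_vkind: "(UNIV :: vkind set) = {A1, A2, P1, P2, Q1, Q2, R1, R2, S1, S2, T1, T2, C1, C2}"
  by (rule set_eqI, case_tac x) auto

lemma UNIV_ekind: "(UNIV :: ekind set) = {A12, AP1, AP2, PQ1, PQ2, QR1, QR2, RS1, RS2, ST1, ST2,
  TA1, TA2, PC1, PC2, CT1, CT2, C12}"
  by (rule set_eqI, case_tac x) auto

instance ekind :: finite
  by standard (simp add: UNIV_ekind)

lemma all_ekind: "(\<forall>k. P k) \<longleftrightarrow> P A12 \<and> P AP1 \<and> P AP2 \<and> P PQ1 \<and> P PQ2 \<and> P QR1 \<and> P QR2 \<and>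
  P RS1 \<and> P RS2 \<and> P ST1 \<and> P ST2 \<and> P TA1 \<and> P TA2 \<and> P PC1 \<and> P PC2 \<and> P CT1 \<and> P CT2 \<and> P C12"
proof
  show "\<forall>k. P k" if "P A12 \<and> P AP1 \<and> P AP2 \<and> P PQ1 \<and> P PQ2 \<and> P QR1 \<and> P QR2 \<and>
    P RS1 \<and> P RS2 \<and> P ST1 \<and> P ST2 \<and> P TA1 \<and> P TA2 \<and> P PC1 \<and> P PC2 \<and> P CT1 \<and> P CT2 \<and> P C12"
    using that by (intro allI, case_tac k) simp_all
qed simp

fun vertex_offset :: "vkind \<Rightarrow> vert" where
  "vertex_offset A1 = (-1,1)" | "vertex_offset A2 = (-1,-1)"
| "vertex_offset P1 = (0,2)" | "vertex_offset P2 = (0,-2)"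
| "vertex_offset Q1 = (0,4)" | "vertex_offset Q2 = (0,-4)"
| "vertex_offset R1 = (1,5)" | "vertex_offset R2 = (1,-5)"
| "vertex_offset S1 = (2,4)" | "vertex_offset S2 = (2,-4)"
| "vertex_offset T1 = (2,2)" | "vertex_offset T2 = (2,-2)"
| "vertex_offset C1 = (1,1)" | "vertex_offset C2 = (1,-1)"

fun edge_offset :: "ekind \<Rightarrow> vert \<times> vert" where
  "edge_offset A12 = ((-1,1),(-1,-1))"
| "edge_offset AP1 = ((-1,1),(0,2))" | "edge_offset AP2 = ((-1,-1),(0,-2))"
| "edge_offset PQ1 = ((0,2),(0,4))" | "edge_offset PQ2 = ((0,-2),(0,-4))"
| "edge_offset QR1 = ((0,4),(1,5))" | "edge_offset QR2 = ((0,-4),(1,-5))"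
| "edge_offset RS1 = ((1,5),(2,4))" | "edge_offset RS2 = ((1,-5),(2,-4))"
| "edge_offset ST1 = ((2,4),(2,2))" | "edge_offset ST2 = ((2,-4),(2,-2))"
| "edge_offset TA1 = ((2,2),(3,1))" | "edge_offset TA2 = ((2,-2),(3,-1))"
| "edge_offset PC1 = ((0,2),(1,1))" | "edge_offset PC2 = ((0,-2),(1,-1))"
| "edge_offset CT1 = ((2,2),(1,1))" | "edge_offset CT2 = ((2,-2),(1,-1))"
| "edge_offset C12 = ((1,1),(1,-1))"

definition shift :: "nat \<Rightarrow> vert \<Rightarrow> vert" where
  "shift i p = (4 * int i + fst p, snd p)"

definition vertex_at :: "nat \<times> vkind \<Rightarrow> vert" where
  "vertex_at p = shift (fst p) (vertex_offset (snd p))"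

definition edge_at :: "nat \<times> ekind \<Rightarrow> vert set" where
  "edge_at p = {shift (fst p) (fst (edge_offset (snd p))), shift (fst p) (snd (edge_offset (snd p)))}"

lemma edge_at_eq_iff: "edge_at p = edge_at q \<longleftrightarrow> p = q"
  by (cases p; cases q; rename_tac i k j l; case_tac k; case_tac l)
    (auto simp: edge_at_def shift_def doubleton_eq_iff, presburger+)

lemma inj_edge_at: "inj edge_at"
  by (simp add: inj_def edge_at_eq_iff)

lemma hex_vertices_explicit: "hex_vertices (x,y) =
  {(x,y+2), (x+1,y+1), (x+1,y-1), (x,y-2), (x-1,y-1), (x-1,y+1)}"
  unfolding hex_vertices_def hex_cycle_def by simp

lemma hex_edges_explicit: "hex_edges (x,y) = {{(x,y+2),(x+1,y+1)}, {(x+1,y+1),(x+1,y-1)},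
   {(x+1,y-1),(x,y-2)}, {(x,y-2),(x-1,y-1)}, {(x-1,y-1),(x-1,y+1)}, {(x-1,y+1),(x,y+2)}}"
proof -
  have image_form: "{f k | k. k < 6} = f ` {..<6}" for f :: "nat \<Rightarrow> vert set"
    by blast
  have "{..<6::nat} = {0,1,2,3,4,5}"
    by (auto simp: lessThan_nat_numeral)
  note six = image_form[unfolded this]
  show ?thesis
    unfolding hex_edges_def hex_cycle_def Let_def six by (simp add: insert_commute)
qed

lemma fragment_vertices: "hex_vertices (4 * int i, 0) \<union> hex_vertices (4 * int i + 2, 0) \<union>
    hex_vertices (4 * int i + 1, 3) \<union> hex_vertices (4 * int i + 1, -3) =
  vertex_at ` ({i} \<times> UNIV \<union> {Suc i} \<times> {A1, A2})"
proof -
  have "hex_vertices (4 * int i, 0) \<union> hex_vertices (4 * int i + 2, 0) \<union>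
      hex_vertices (4 * int i + 1, 3) \<union> hex_vertices (4 * int i + 1, -3) =
    (\<lambda>k. vertex_at (i, k)) ` UNIV \<union> {vertex_at (Suc i, A1), vertex_at (Suc i, A2)}"
    unfolding hex_vertices_explicit UNIV_vkind
    by (intro equalityI) (simp_all add: vertex_at_def shift_def)
  then show ?thesis by blast
qed

lemma fragment_edges: "hex_edges (4 * int i, 0) \<union> hex_edges (4 * int i + 2, 0) \<union>
    hex_edges (4 * int i + 1, 3) \<union> hex_edges (4 * int i + 1, -3) =
  edge_at ` ({i} \<times> UNIV \<union> {Suc i} \<times> {A12})"
proof -
  have "hex_edges (4 * int i, 0) \<union> hex_edges (4 * int i + 2, 0) \<union>
      hex_edges (4 * int i + 1, 3) \<union> hex_edges (4 * int i + 1, -3) =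
    (\<lambda>k. edge_at (i, k)) ` UNIV \<union> {edge_at (Suc i, A12)}"
    unfolding hex_edges_explicit UNIV_ekind
    by (intro equalityI) (simp_all add: edge_at_def shift_def doubleton_eq_iff)
  then show ?thesis by blast
qed

lemma UN_fragment_labels:
  assumes "0 < n"
  shows "(\<Union>i<n. {i} \<times> UNIV \<union> {Suc i} \<times> B) = {..<n} \<times> UNIV \<union> {n} \<times> B"
proof (intro equalityI subsetI)
  fix p assume "p \<in> {..<n} \<times> UNIV \<union> {n} \<times> B"
  moreover have "n = Suc (n - 1)" using assms by simp
  ultimately show "p \<in> (\<Union>i<n. {i} \<times> UNIV \<union> {Suc i} \<times> B)"
    by (auto intro: UN_I[of "n - 1"])
qed auto

definition vertex_labels :: "nat \<Rightarrow> (nat \<times> vkind) set" where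
  "vertex_labels n = {..<n} \<times> UNIV \<union> {n} \<times> {A1, A2}"

definition edge_labels :: "nat \<Rightarrow> (nat \<times> ekind) set" where
  "edge_labels n = {..<n} \<times> UNIV \<union> {n} \<times> {A12}"

lemma pyrene_V_labels:
  assumes "0 < n" shows "pyrene_V n = vertex_at ` vertex_labels n"
proof -
  have "pyrene_V n = (\<Union>i<n. hex_vertices (4 * int i, 0) \<union> hex_vertices (4 * int i + 2, 0) \<union>
      hex_vertices (4 * int i + 1, 3) \<union> hex_vertices (4 * int i + 1, -3))"
    unfolding pyrene_V_def pyrene_centres_def by (simp add: UN_UN_flatten Un_assoc)
  also have "\<dots> = vertex_at ` vertex_labels n"
    unfolding fragment_vertices vertex_labels_def UN_fragment_labels[OF assms, symmetric] by blast
  finally show ?thesis .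
qed

lemma pyrene_E_labels:
  assumes "0 < n" shows "pyrene_E n = edge_at ` edge_labels n"
proof -
  have "pyrene_E n = (\<Union>i<n. hex_edges (4 * int i, 0) \<union> hex_edges (4 * int i + 2, 0) \<union>
      hex_edges (4 * int i + 1, 3) \<union> hex_edges (4 * int i + 1, -3))"
    unfolding pyrene_E_def pyrene_centres_def by (simp add: UN_UN_flatten Un_assoc)
  also have "\<dots> = edge_at ` edge_labels n"
    unfolding fragment_edges edge_labels_def UN_fragment_labels[OF assms, symmetric] by blast
  finally show ?thesis .
qed

fun incident_edges :: "nat \<times> vkind \<Rightarrow> (nat \<times> ekind) list" where
  "incident_edges (i, A1) = [(i,A12), (i,AP1)] @ (case i of 0 \<Rightarrow> [] | Suc j \<Rightarrow> [(j,TA1)])"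
| "incident_edges (i, A2) = [(i,A12), (i,AP2)] @ (case i of 0 \<Rightarrow> [] | Suc j \<Rightarrow> [(j,TA2)])"
| "incident_edges (i, P1) = [(i,AP1), (i,PQ1), (i,PC1)]"
| "incident_edges (i, P2) = [(i,AP2), (i,PQ2), (i,PC2)]"
| "incident_edges (i, Q1) = [(i,PQ1), (i,QR1)]"
| "incident_edges (i, Q2) = [(i,PQ2), (i,QR2)]"
| "incident_edges (i, R1) = [(i,QR1), (i,RS1)]"
| "incident_edges (i, R2) = [(i,QR2), (i,RS2)]"
| "incident_edges (i, S1) = [(i,RS1), (i,ST1)]"
| "incident_edges (i, S2) = [(i,RS2), (i,ST2)]"
| "incident_edges (i, T1) = [(i,ST1), (i,TA1), (i,CT1)]"
| "incident_edges (i, T2) = [(i,ST2), (i,TA2), (i,CT2)]"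
| "incident_edges (i, C1) = [(i,PC1), (i,CT1), (i,C12)]"
| "incident_edges (i, C2) = [(i,PC2), (i,CT2), (i,C12)]"

lemma vertex_at_in_edge_at: "vertex_at v \<in> edge_at e \<longleftrightarrow> e \<in> set (incident_edges v)"
  by (cases v; cases e; rename_tac i k j l; case_tac k; case_tac l; case_tac i)
    (auto simp: vertex_at_def edge_at_def shift_def, presburger+)

lemma distinct_incident_edges: "distinct (incident_edges v)"
  by (cases v; rename_tac i k; case_tac k; case_tac i) auto

definition exactly_one :: "bool list \<Rightarrow> bool" where
  "exactly_one bs \<longleftrightarrow> length (filter id bs) = 1"

lemma exactly_one_simps [simp]:
  "exactly_one [a, b] \<longleftrightarrow> a \<noteq> b"
  "exactly_one [a, b, c] \<longleftrightarrow> (a \<and> \<not> b \<and> \<not> c) \<or> (\<not> a \<and> b \<and> \<not> c) \<or> (\<not> a \<and> \<not> b \<and> c)"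
  by (auto simp: exactly_one_def)

lemma ex1_in_distinct_list_iff:
  assumes "distinct xs"
  shows "(\<exists>!x. x \<in> set xs \<and> P x) \<longleftrightarrow> exactly_one (map P xs)"
proof -
  have "exactly_one (map P xs) \<longleftrightarrow> card (set xs \<inter> {x. P x}) = 1"
    using distinct_length_filter[OF assms, of P]
    by (simp add: exactly_one_def filter_map comp_def Int_commute)
  also have "\<dots> \<longleftrightarrow> (\<exists>x. set xs \<inter> {x. P x} = {x})"
    using card_1_singleton_iff by simp
  also have "\<dots> \<longleftrightarrow> (\<exists>!x. x \<in> set xs \<and> P x)"
    by (simp add: set_eq_iff) metis
  finally show ?thesis ..
qed

lemma ex1_image_iff:
  assumes "inj f"
  shows "(\<exists>!y. y \<in> f ` A \<and> P y) \<longleftrightarrow> (\<exists>!x. x \<in> A \<and> P (f x))"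
  using assms unfolding inj_def by blast

lemma perfect_matching_iff_local:
  assumes "0 < n" and "Sel \<subseteq> edge_labels n"
  shows "perfect_matching (pyrene_V n) (pyrene_E n) (edge_at ` Sel) \<longleftrightarrow>
    (\<forall>v\<in>vertex_labels n. exactly_one (map (\<lambda>e. e \<in> Sel) (incident_edges v)))"
proof -
  have "(\<exists>!e. e \<in> edge_at ` Sel \<and> vertex_at v \<in> e) \<longleftrightarrow>
      exactly_one (map (\<lambda>e. e \<in> Sel) (incident_edges v))" for v
  proof -
    have "(\<exists>!e. e \<in> edge_at ` Sel \<and> vertex_at v \<in> e) \<longleftrightarrow>
        (\<exists>!e. e \<in> Sel \<and> vertex_at v \<in> edge_at e)"
      by (rule ex1_image_iff[OF inj_edge_at])
    also have "\<dots> \<longleftrightarrow> (\<exists>!e. e \<in> set (incident_edges v) \<and> e \<in> Sel)"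
      by (simp only: vertex_at_in_edge_at conj_commute)
    finally show ?thesis
      by (simp add: ex1_in_distinct_list_iff[OF distinct_incident_edges])
  qed
  then show ?thesis
    using assms by (auto simp: perfect_matching_def pyrene_V_labels pyrene_E_labels)
qed

section \<open>Perfect matchings as configurations\<close>

(* The state of the edge A12 of fragment i: it lies in the matching, or its ends are matched by
   TA1, TA2 of fragment i - 1, or by AP1, AP2 of fragment i. *)
datatype vstate = Vertical | ToLeft | ToRight

definition central :: "vstate \<Rightarrow> vstate \<Rightarrow> bool" where
  "central l r \<longleftrightarrow> l = ToRight \<or> r = ToLeft"

definition compatible :: "vstate \<Rightarrow> bool \<Rightarrow> bool \<Rightarrow> vstate \<Rightarrow> bool" where
  "compatible l t b r \<longleftrightarrow> \<not> (l = ToRight \<and> r = ToLeft) \<and> (central l r \<longrightarrow> \<not> t \<and> \<not> b)"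

fun chosen :: "vstate \<Rightarrow> vstate \<Rightarrow> bool \<Rightarrow> bool \<Rightarrow> ekind \<Rightarrow> bool" where
  "chosen l r t b A12 = (l = Vertical)"
| "chosen l r t b AP1 = (l = ToRight)"
| "chosen l r t b AP2 = (l = ToRight)"
| "chosen l r t b TA1 = (r = ToLeft)"
| "chosen l r t b TA2 = (r = ToLeft)"
| "chosen l r t b C12 = central l r"
| "chosen l r t b PC1 = (\<not> central l r \<and> t)"
| "chosen l r t b CT1 = (\<not> central l r \<and> \<not> t)"
| "chosen l r t b QR1 = ((\<not> central l r \<and> t) \<or> l = ToRight)"
| "chosen l r t b ST1 = ((\<not> central l r \<and> t) \<or> l = ToRight)"
| "chosen l r t b PQ1 = ((\<not> central l r \<and> \<not> t) \<or> r = ToLeft)"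
| "chosen l r t b RS1 = ((\<not> central l r \<and> \<not> t) \<or> r = ToLeft)"
| "chosen l r t b PC2 = (\<not> central l r \<and> b)"
| "chosen l r t b CT2 = (\<not> central l r \<and> \<not> b)"
| "chosen l r t b QR2 = ((\<not> central l r \<and> b) \<or> l = ToRight)"
| "chosen l r t b ST2 = ((\<not> central l r \<and> b) \<or> l = ToRight)"
| "chosen l r t b PQ2 = ((\<not> central l r \<and> \<not> b) \<or> r = ToLeft)"
| "chosen l r t b RS2 = ((\<not> central l r \<and> \<not> b) \<or> r = ToLeft)"

(* (J, t, b): J i is the state of the edge A12 of fragment i; when the central edge C12 of
   fragment i is unused, t i and b i choose between the two perfect matchings of the hexagons
   s_{i,1} and s_{i,2}. *)
type_synonym config = "(nat \<Rightarrow> vstate) \<times> (nat \<Rightarrow> bool) \<times> (nat \<Rightarrow> bool)"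

fun selected :: "config \<Rightarrow> nat \<times> ekind \<Rightarrow> bool" where
  "selected (J, t, b) (i, k) = chosen (J i) (J (Suc i)) (t i) (b i) k"

fun admissible :: "nat \<Rightarrow> config \<Rightarrow> bool" where
  "admissible n (J, t, b) \<longleftrightarrow> (J 0 = Vertical \<or> J 0 = ToRight) \<and> (J n = Vertical \<or> J n = ToLeft) \<and>
     (\<forall>i<n. compatible (J i) (t i) (b i) (J (Suc i)))"

(* Fixes the values that do not affect the matching, so that matching_of n is injective on
   normalized admissible configurations. *)
fun normalized :: "nat \<Rightarrow> config \<Rightarrow> bool" where
  "normalized n (J, t, b) \<longleftrightarrow> (\<forall>i>n. J i = Vertical) \<and> (\<forall>i\<ge>n. \<not> t i \<and> \<not> b i)"

definition matching_of :: "nat \<Rightarrow> config \<Rightarrow> vert set set" where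
  "matching_of n w = edge_at ` {p \<in> edge_labels n. selected w p}"

lemma edge_at_in_matching_of: "edge_at p \<in> matching_of n w \<longleftrightarrow> p \<in> edge_labels n \<and> selected w p"
  by (auto simp: matching_of_def inj_image_mem_iff[OF inj_edge_at])

lemma admissible_perfect_matching:
  assumes n: "0 < n" and adm: "admissible n w"
  shows "perfect_matching (pyrene_V n) (pyrene_E n) (matching_of n w)"
proof -
  obtain J t b where w: "w = (J, t, b)" by (cases w)
  have "exactly_one (map (\<lambda>e. e \<in> {p \<in> edge_labels n. selected w p}) (incident_edges (i, k)))"
    if ik: "(i, k) \<in> vertex_labels n" for i k
  proof (cases "i < n")
    case i: True
    have "compatible (J i) (t i) (b i) (J (Suc i))" and "J 0 = Vertical \<or> J 0 = ToRight"
      using adm w i by simp_all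
    then show ?thesis
      using i w by (cases "k \<in> {A1, A2}")
        ((cases i; cases "J i"; auto simp: edge_labels_def),
         (cases k; cases "J i"; cases "J (Suc i)"; cases "t i"; cases "b i";
          simp add: edge_labels_def compatible_def central_def))
  next
    case False
    then have "i = n" and "k = A1 \<or> k = A2" using ik by (auto simp: vertex_labels_def)
    moreover have "J n = Vertical \<or> J n = ToLeft" using adm w by simp
    moreover obtain j where "n = Suc j" using n by (cases n) auto
    ultimately show ?thesis using w by (cases "J n"; auto simp: edge_labels_def)
  qed
  then show ?thesis
    unfolding matching_of_def by (subst perfect_matching_iff_local[OF n]) auto
qed

lemma fragment_selection:
  fixes m :: "ekind \<Rightarrow> bool"
  assumes left: "exactly_one [m A12, m AP1, lt]" "exactly_one [m A12, m AP2, lb]" "lt = lb"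
    and inner: "exactly_one [m AP1, m PQ1, m PC1]" "exactly_one [m AP2, m PQ2, m PC2]"
      "exactly_one [m PQ1, m QR1]" "exactly_one [m PQ2, m QR2]"
      "exactly_one [m QR1, m RS1]" "exactly_one [m QR2, m RS2]"
      "exactly_one [m RS1, m ST1]" "exactly_one [m RS2, m ST2]"
      "exactly_one [m ST1, m TA1, m CT1]" "exactly_one [m ST2, m TA2, m CT2]"
      "exactly_one [m PC1, m CT1, m C12]" "exactly_one [m PC2, m CT2, m C12]"
    and right: "exactly_one [rv, rt, m TA1]" "exactly_one [rv, rb, m TA2]"
    and l: "l = (if m A12 then Vertical else if lt then ToLeft else ToRight)"
    and r: "r = (if rv then Vertical else if m TA1 then ToLeft else ToRight)"
  shows "m TA1 = m TA2 \<and> compatible l (m PC1) (m PC2) r \<and> (\<forall>k. m k = chosen l r (m PC1) (m PC2) k)"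
  unfolding l r all_ekind using left inner right unfolding exactly_one_simps
  by (cases "m A12"; cases rv; cases lt; cases "m TA1"; cases "m PC1"; cases "m PC2";
      simp add: compatible_def central_def; blast)

definition left_matched :: "(nat \<times> ekind \<Rightarrow> bool) \<Rightarrow> ekind \<Rightarrow> nat \<Rightarrow> bool" where
  "left_matched m e i = (case i of 0 \<Rightarrow> False | Suc j \<Rightarrow> m (j, e))"

definition state_of :: "nat \<Rightarrow> (nat \<times> ekind \<Rightarrow> bool) \<Rightarrow> nat \<Rightarrow> vstate" where
  "state_of n m i = (if i \<le> n then if m (i, A12) then Vertical else if left_matched m TA1 i then ToLeft
     else ToRight else Vertical)"

lemma exactly_one_at_vertical_edge:
  assumes local: "\<And>v. v \<in> vertex_labels n \<Longrightarrow> exactly_one (map m (incident_edges v))"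
    and "i \<le> n"
  shows "exactly_one [m (i, A12), m (i, AP1), left_matched m TA1 i]"
    and "exactly_one [m (i, A12), m (i, AP2), left_matched m TA2 i]"
proof -
  have "(i, A1) \<in> vertex_labels n" "(i, A2) \<in> vertex_labels n"
    using \<open>i \<le> n\<close> by (auto simp: vertex_labels_def)
  from this[THEN local] show "exactly_one [m (i, A12), m (i, AP1), left_matched m TA1 i]"
    and "exactly_one [m (i, A12), m (i, AP2), left_matched m TA2 i]"
    by (cases i; auto simp: left_matched_def)+
qed

lemma fragment_step:
  assumes local: "\<And>v. v \<in> vertex_labels n \<Longrightarrow> exactly_one (map m (incident_edges v))"
    and i: "i < n" and agree: "left_matched m TA1 i = left_matched m TA2 i"
  shows "m (i, TA1) = m (i, TA2) \<and> compatible (state_of n m i) (m (i, PC1)) (m (i, PC2)) (state_of n m (Suc i)) \<and>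
    (\<forall>k. m (i, k) = chosen (state_of n m i) (state_of n m (Suc i)) (m (i, PC1)) (m (i, PC2)) k)"
proof -
  have inner: "exactly_one (map m (incident_edges (i, k)))" for k
    using local[of "(i, k)"] i by (simp add: vertex_labels_def)
  have "Suc i \<le> n" using i by simp
  note right = exactly_one_at_vertical_edge[OF local this]
  show ?thesis
  proof (rule fragment_selection[where m = "\<lambda>k. m (i, k)" and lt = "left_matched m TA1 i"
        and lb = "left_matched m TA2 i" and rv = "m (Suc i, A12)" and rt = "m (Suc i, AP1)"
        and rb = "m (Suc i, AP2)"])
  qed (use i agree right exactly_one_at_vertical_edge[OF local less_imp_le[OF i]]
      inner[of P1] inner[of P2] inner[of Q1] inner[of Q2] inner[of R1] inner[of R2]
      inner[of S1] inner[of S2] inner[of T1] inner[of T2] inner[of C1] inner[of C2] in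
      \<open>simp_all add: state_of_def left_matched_def del: exactly_one_simps\<close>)
qed

lemma left_matched_agree:
  assumes local: "\<And>v. v \<in> vertex_labels n \<Longrightarrow> exactly_one (map m (incident_edges v))"
    and "i \<le> n"
  shows "left_matched m TA1 i = left_matched m TA2 i"
  using \<open>i \<le> n\<close>
proof (induction i)
  case (Suc i)
  then have "i < n" and "left_matched m TA1 i = left_matched m TA2 i" by simp_all
  from fragment_step[OF local this, THEN conjunct1] show ?case
    by (simp add: left_matched_def)
qed (simp add: left_matched_def)

lemma config_of_local_selection:
  assumes n: "0 < n"
    and sub: "\<And>p. m p \<Longrightarrow> p \<in> edge_labels n"
    and local: "\<And>v. v \<in> vertex_labels n \<Longrightarrow> exactly_one (map m (incident_edges v))"
  shows "\<exists>w. admissible n w \<and> normalized n w \<and> (\<forall>p\<in>edge_labels n. m p = selected w p)"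
proof -
  define t where "t i = (i < n \<and> m (i, PC1))" for i
  define b where "b i = (i < n \<and> m (i, PC2))" for i
  define w where "w = (state_of n m, t, b)"
  have fragment: "compatible (state_of n m i) (t i) (b i) (state_of n m (Suc i)) \<and>
      (\<forall>k. m (i, k) = selected w (i, k))" if i: "i < n" for i
  proof -
    have tb: "t i = m (i, PC1)" "b i = m (i, PC2)"
      using i by (simp_all add: t_def b_def)
    show ?thesis unfolding w_def selected.simps tb
      using fragment_step[OF local i left_matched_agree[OF local less_imp_le[OF i]]] by blast
  qed
  have "\<not> m (n, AP1)"
    using sub by (auto simp: edge_labels_def)
  then have "state_of n m n = Vertical \<or> state_of n m n = ToLeft"
    using exactly_one_at_vertical_edge(1)[OF local order_refl] by (auto simp: state_of_def)
  moreover have "state_of n m 0 = Vertical \<or> state_of n m 0 = ToRight"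
    by (simp add: state_of_def left_matched_def)
  ultimately have "admissible n w"
    using fragment by (simp add: w_def)
  moreover have "normalized n w"
    by (simp add: w_def state_of_def t_def b_def)
  moreover have "m p = selected w p" if p: "p \<in> edge_labels n" for p
  proof -
    obtain i k where ik: "p = (i, k)" by (cases p)
    with p consider "i < n" | "i = n" "k = A12" by (auto simp: edge_labels_def)
    then show ?thesis
    proof cases
      case 1
      then show ?thesis using fragment[of i] ik by simp
    next
      case 2
      then show ?thesis using ik by (simp add: w_def state_of_def)
    qed
  qed
  ultimately show ?thesis by blast
qed

lemma perfect_matching_config:
  assumes n: "0 < n" and pm: "perfect_matching (pyrene_V n) (pyrene_E n) M"
  shows "\<exists>w. admissible n w \<and> normalized n w \<and> M = matching_of n w"
proof -
  define Sel where "Sel = {p \<in> edge_labels n. edge_at p \<in> M}"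
  have "M \<subseteq> edge_at ` edge_labels n"
    using pm pyrene_E_labels[OF n] by (simp add: perfect_matching_def)
  then have M: "M = edge_at ` Sel"
    unfolding Sel_def by blast
  have "Sel \<subseteq> edge_labels n"
    by (simp add: Sel_def)
  with pm have "\<forall>v\<in>vertex_labels n. exactly_one (map (\<lambda>e. e \<in> Sel) (incident_edges v))"
    unfolding M by (simp add: perfect_matching_iff_local[OF n])
  with \<open>Sel \<subseteq> edge_labels n\<close>
  have "\<exists>w. admissible n w \<and> normalized n w \<and> (\<forall>p\<in>edge_labels n. p \<in> Sel \<longleftrightarrow> selected w p)"
    by (intro config_of_local_selection[OF n]) auto
  then obtain w where w: "admissible n w" "normalized n w" "\<forall>p\<in>edge_labels n. p \<in> Sel \<longleftrightarrow> selected w p"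
    by blast
  then have "Sel = {p \<in> edge_labels n. selected w p}"
    using \<open>Sel \<subseteq> edge_labels n\<close> by blast
  then show ?thesis
    using w M by (intro exI[of _ w]) (simp add: matching_of_def)
qed

section \<open>Forcing numbers\<close>

fun forcing_weight :: "nat \<Rightarrow> config \<Rightarrow> nat" where
  "forcing_weight n (J, t, b) = (\<Sum>i<n. if central (J i) (J (Suc i)) then 1 else 2)"

fun key_edges :: "config \<Rightarrow> nat \<Rightarrow> ekind set" where
  "key_edges (J, t, b) i = (if J i = ToRight then {AP1} else if J (Suc i) = ToLeft then {TA1}
     else {if t i then PC1 else CT1, if b i then PC2 else CT2})"

definition key_set :: "nat \<Rightarrow> config \<Rightarrow> vert set set" where
  "key_set n w = edge_at ` (SIGMA i:{..<n}. key_edges w i)"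

lemma card_key_set: "card (key_set n w) = forcing_weight n w"
proof -
  obtain J t b where w: "w = (J, t, b)" by (cases w)
  have "card (key_set n w) = card (SIGMA i:{..<n}. key_edges w i)"
    unfolding key_set_def by (rule card_image) (simp add: inj_on_def edge_at_eq_iff)
  also have "\<dots> = (\<Sum>i<n. card (key_edges w i))"
    by (rule card_SigmaI) (auto simp: w)
  also have "\<dots> = forcing_weight n w"
    by (auto simp: w central_def intro: sum.cong)
  finally show ?thesis .
qed

lemma selected_key_edges:
  "admissible n w \<Longrightarrow> i < n \<Longrightarrow> k \<in> key_edges w i \<Longrightarrow> selected w (i, k)"
  by (cases w) (auto simp: compatible_def central_def split: if_splits)

lemma key_set_subset: "admissible n w \<Longrightarrow> key_set n w \<subseteq> matching_of n w"
  by (auto simp: key_set_def edge_at_in_matching_of edge_labels_def selected_key_edges)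

lemma key_edges_transfer:
  assumes key: "\<forall>i<n. \<forall>k\<in>key_edges (J, t, b) i. selected (J', t', b') (i, k)" and i: "i < n"
  shows "J i = ToRight \<Longrightarrow> J' i = ToRight"
    and "J i \<noteq> ToRight \<Longrightarrow> J (Suc i) = ToLeft \<Longrightarrow> J' (Suc i) = ToLeft"
    and "\<not> central (J i) (J (Suc i)) \<Longrightarrow> \<not> central (J' i) (J' (Suc i)) \<and> t' i = t i \<and> b' i = b i"
proof -
  show "J i = ToRight \<Longrightarrow> J' i = ToRight"
    and "J i \<noteq> ToRight \<Longrightarrow> J (Suc i) = ToLeft \<Longrightarrow> J' (Suc i) = ToLeft"
    using key i by auto
  show "\<not> central (J i) (J (Suc i)) \<Longrightarrow> \<not> central (J' i) (J' (Suc i)) \<and> t' i = t i \<and> b' i = b i"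
    using key i by (cases "t i"; cases "b i"; auto simp: central_def)
qed

lemma key_edges_determine_states:
  assumes adm: "admissible n (J, t, b)" and adm': "admissible n (J', t', b')"
    and key: "\<forall>i<n. \<forall>k\<in>key_edges (J, t, b) i. selected (J', t', b') (i, k)"
    and "i \<le> n"
  shows "J' i = J i"
proof -
  note transfer = key_edges_transfer[OF key]
  have compat: "compatible (J i) (t i) (b i) (J (Suc i))" if "i < n" for i
    using adm that by simp
  have compat': "compatible (J' i) (t' i) (b' i) (J' (Suc i))" if "i < n" for i
    using adm' that by simp
  show ?thesis
  proof (cases "J i")
    case ToRight
    then have "i < n" using adm \<open>i \<le> n\<close> by (cases "i = n") auto
    then show ?thesis using transfer(1) ToRight by simp
  next
    case ToLeft
    then obtain j where j: "i = Suc j" using adm by (cases i) auto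
    with \<open>i \<le> n\<close> have "j < n" by simp
    moreover have "J j \<noteq> ToRight" using compat[OF \<open>j < n\<close>] ToLeft j by (auto simp: compatible_def)
    ultimately show ?thesis using transfer(2) ToLeft j by simp
  next
    case Vertical
    have "J' i \<noteq> ToLeft"
    proof (cases i)
      case (Suc j)
      with \<open>i \<le> n\<close> have j: "j < n" by simp
      show ?thesis
      proof (cases "central (J j) (J (Suc j))")
        case True
        then have "J' j = ToRight" using transfer(1)[OF j] Vertical Suc by (simp add: central_def)
        then show ?thesis using compat'[OF j] Suc by (auto simp: compatible_def)
      qed (use transfer(3)[OF j] Suc in \<open>auto simp: central_def\<close>)
    qed (use adm' in auto)
    moreover have "J' i \<noteq> ToRight"
    proof (cases "i = n")
      case False
      with \<open>i \<le> n\<close> have i: "i < n" by simp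
      show ?thesis
      proof (cases "central (J i) (J (Suc i))")
        case True
        then have "J' (Suc i) = ToLeft" using transfer(2)[OF i] Vertical by (simp add: central_def)
        then show ?thesis using compat'[OF i] by (auto simp: compatible_def)
      qed (use transfer(3)[OF i] in \<open>auto simp: central_def\<close>)
    qed (use adm' in auto)
    ultimately show ?thesis using Vertical by (cases "J' i") auto
  qed
qed

lemma key_set_determines_config:
  assumes adm: "admissible n w" "admissible n w'" and norm: "normalized n w" "normalized n w'"
    and key_set: "key_set n w \<subseteq> matching_of n w'"
  shows "w' = w"
proof -
  obtain J t b where w: "w = (J, t, b)" by (cases w)
  obtain J' t' b' where w': "w' = (J', t', b')" by (cases w')
  have key: "\<forall>i<n. \<forall>k\<in>key_edges (J, t, b) i. selected (J', t', b') (i, k)"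
  proof (intro allI impI ballI)
    fix i k assume "i < n" "k \<in> key_edges (J, t, b) i"
    then have "edge_at (i, k) \<in> matching_of n w'"
      using key_set w by (auto simp: key_set_def)
    then show "selected (J', t', b') (i, k)" using w' by (simp add: edge_at_in_matching_of)
  qed
  have J: "J' = J"
  proof
    fix i show "J' i = J i"
      using key_edges_determine_states[of n J t b J' t' b' i] adm norm key w w'
      by (cases "i \<le> n") auto
  qed
  have "t' i = t i \<and> b' i = b i" for i
  proof (cases "i < n")
    case True
    show ?thesis
    proof (cases "central (J i) (J (Suc i))")
      case False
      then show ?thesis using key_edges_transfer(3)[OF key \<open>i < n\<close>] J by simp
    next
      case True
      then show ?thesis using adm \<open>i < n\<close> w w' J by (auto simp: compatible_def)
    qed
  qed (use norm w w' in auto)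
  then show ?thesis using J w w' by auto
qed

lemma inj_on_matching_of: "inj_on (matching_of n) {w. admissible n w \<and> normalized n w}"
  by (rule inj_onI) (metis key_set_subset key_set_determines_config mem_Collect_eq)

lemma key_set_forcing:
  assumes n: "0 < n" and adm: "admissible n w" and norm: "normalized n w"
  shows "forcing_set (pyrene_V n) (pyrene_E n) (matching_of n w) (key_set n w)"
  unfolding forcing_set_def
proof (intro conjI allI impI)
  show "key_set n w \<subseteq> matching_of n w" using adm by (rule key_set_subset)
  fix M assume M: "perfect_matching (pyrene_V n) (pyrene_E n) M \<and> key_set n w \<subseteq> M"
  then obtain w' where "admissible n w'" "normalized n w'" "M = matching_of n w'"
    using perfect_matching_config[OF n] by blast
  then show "M = matching_of n w" using key_set_determines_config adm norm M by blast
qed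

lemma finite_matching_of: "finite (matching_of n w)"
proof -
  have "finite (edge_labels n)" by (simp add: edge_labels_def)
  then show ?thesis unfolding matching_of_def by simp
qed

lemma finite_forcing_set: "forcing_set V E M S \<Longrightarrow> finite M \<Longrightarrow> finite S"
  unfolding forcing_set_def by (blast intro: finite_subset)

lemma forcing_set_meets_difference:
  assumes "forcing_set V E M S" and "perfect_matching V E M'" and "M' \<noteq> M"
  shows "S \<inter> (M - M') \<noteq> {}"
  using assms unfolding forcing_set_def by blast

lemma forcing_set_meets_flip:
  assumes n: "0 < n" and fs: "forcing_set (pyrene_V n) (pyrene_E n) (matching_of n w) S"
    and adm': "admissible n w'"
    and D: "\<And>p. selected w p \<Longrightarrow> \<not> selected w' p \<Longrightarrow> p \<in> D"
    and p0: "p0 \<in> edge_labels n" "selected w p0 \<noteq> selected w' p0"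
  shows "S \<inter> edge_at ` D \<noteq> {}"
proof -
  have "matching_of n w' \<noteq> matching_of n w"
    using p0 edge_at_in_matching_of by metis
  then have "S \<inter> (matching_of n w - matching_of n w') \<noteq> {}"
    by (rule forcing_set_meets_difference[OF fs admissible_perfect_matching[OF n adm']])
  moreover have "matching_of n w - matching_of n w' \<subseteq> edge_at ` D"
    using D by (auto simp: matching_of_def)
  ultimately show ?thesis by blast
qed

definition top_hexagon :: "nat \<Rightarrow> (nat \<times> ekind) set" where
  "top_hexagon i = {i} \<times> {PC1, CT1, PQ1, QR1, RS1, ST1}"

definition bottom_hexagon :: "nat \<Rightarrow> (nat \<times> ekind) set" where
  "bottom_hexagon i = {i} \<times> {PC2, CT2, PQ2, QR2, RS2, ST2}"

lemma flip_top_hexagon: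
  assumes adm: "admissible n (J, t, b)" and "\<not> central (J i) (J (Suc i))"
  shows "admissible n (J, t(i := \<not> t i), b)"
    and "selected (J, t, b) p \<Longrightarrow> \<not> selected (J, t(i := \<not> t i), b) p \<Longrightarrow> p \<in> top_hexagon i"
    and "selected (J, t, b) (i, PC1) \<noteq> selected (J, t(i := \<not> t i), b) (i, PC1)"
  using assms by (cases p; auto simp: compatible_def top_hexagon_def split: if_splits;
      rename_tac k; case_tac k; simp)+

lemma flip_bottom_hexagon:
  assumes adm: "admissible n (J, t, b)" and "\<not> central (J i) (J (Suc i))"
  shows "admissible n (J, t, b(i := \<not> b i))"
    and "selected (J, t, b) p \<Longrightarrow> \<not> selected (J, t, b(i := \<not> b i)) p \<Longrightarrow> p \<in> bottom_hexagon i"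
    and "selected (J, t, b) (i, PC2) \<noteq> selected (J, t, b(i := \<not> b i)) (i, PC2)"
  using assms by (cases p; auto simp: compatible_def bottom_hexagon_def split: if_splits;
      rename_tac k; case_tac k; simp)+

lemma flip_right_state:
  assumes adm: "admissible n (J, t, b)" and i: "i < n" and R: "J i = ToRight"
  shows "admissible n (J(i := Vertical), t(i := True), b(i := True))"
    and "selected (J, t, b) p \<Longrightarrow> \<not> selected (J(i := Vertical), t(i := True), b(i := True)) p \<Longrightarrow>
      p \<in> {i} \<times> {AP1, AP2, C12}"
    and "selected (J, t, b) (i, C12) \<noteq> selected (J(i := Vertical), t(i := True), b(i := True)) (i, C12)"
proof -
  have r: "J (Suc i) \<noteq> ToLeft" using adm i R by (auto simp: compatible_def)
  show "admissible n (J(i := Vertical), t(i := True), b(i := True))"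
    using adm i R r by (auto simp: compatible_def central_def)
  show "selected (J, t, b) p \<Longrightarrow> \<not> selected (J(i := Vertical), t(i := True), b(i := True)) p \<Longrightarrow>
      p \<in> {i} \<times> {AP1, AP2, C12}"
    using R r by (cases p; rename_tac j k; case_tac k; auto simp: central_def split: if_splits)
  show "selected (J, t, b) (i, C12) \<noteq> selected (J(i := Vertical), t(i := True), b(i := True)) (i, C12)"
    using R r by (simp add: central_def)
qed

lemma flip_left_state:
  assumes adm: "admissible n (J, t, b)" and i: "i < n" and L: "J (Suc i) = ToLeft"
  shows "admissible n (J(Suc i := Vertical), t, b)"
    and "selected (J, t, b) p \<Longrightarrow> \<not> selected (J(Suc i := Vertical), t, b) p \<Longrightarrow>
      p \<in> {i} \<times> {TA1, TA2, C12}"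
    and "selected (J, t, b) (i, C12) \<noteq> selected (J(Suc i := Vertical), t, b) (i, C12)"
proof -
  have l: "J i \<noteq> ToRight" and tb: "\<not> t i" "\<not> b i"
    using adm i L by (auto simp: compatible_def central_def)
  show "admissible n (J(Suc i := Vertical), t, b)"
    using adm i L l by (auto simp: compatible_def central_def)
  show "selected (J, t, b) p \<Longrightarrow> \<not> selected (J(Suc i := Vertical), t, b) p \<Longrightarrow>
      p \<in> {i} \<times> {TA1, TA2, C12}"
    using L l tb by (cases p; rename_tac j k; case_tac k; auto simp: central_def split: if_splits)
  show "selected (J, t, b) (i, C12) \<noteq> selected (J(Suc i := Vertical), t, b) (i, C12)"
    using L l by (simp add: central_def)
qed

lemma forcing_set_meets_hexagons:
  assumes n: "0 < n" and adm: "admissible n (J, t, b)" and i: "i < n"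
    and fs: "forcing_set (pyrene_V n) (pyrene_E n) (matching_of n (J, t, b)) S"
    and noncentral: "\<not> central (J i) (J (Suc i))"
  shows "S \<inter> edge_at ` top_hexagon i \<noteq> {}" and "S \<inter> edge_at ` bottom_hexagon i \<noteq> {}"
proof -
  have PC1: "(i, PC1) \<in> edge_labels n" and PC2: "(i, PC2) \<in> edge_labels n"
    using i by (simp_all add: edge_labels_def)
  show "S \<inter> edge_at ` top_hexagon i \<noteq> {}"
    by (rule forcing_set_meets_flip[OF n fs flip_top_hexagon(1)[OF adm noncentral] _ PC1
        flip_top_hexagon(3)[OF adm noncentral]]) (rule flip_top_hexagon(2)[OF adm noncentral])
  show "S \<inter> edge_at ` bottom_hexagon i \<noteq> {}"
    by (rule forcing_set_meets_flip[OF n fs flip_bottom_hexagon(1)[OF adm noncentral] _ PC2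
        flip_bottom_hexagon(3)[OF adm noncentral]]) (rule flip_bottom_hexagon(2)[OF adm noncentral])
qed

lemma forcing_set_meets_central:
  assumes n: "0 < n" and adm: "admissible n (J, t, b)" and i: "i < n"
    and fs: "forcing_set (pyrene_V n) (pyrene_E n) (matching_of n (J, t, b)) S"
    and central: "central (J i) (J (Suc i))"
  shows "S \<inter> edge_at ` ({i} \<times> UNIV) \<noteq> {}"
proof -
  have C12: "(i, C12) \<in> edge_labels n"
    using i by (simp add: edge_labels_def)
  show ?thesis
  proof (cases "J i = ToRight")
    case R: True
    have "S \<inter> edge_at ` ({i} \<times> {AP1, AP2, C12}) \<noteq> {}"
      by (rule forcing_set_meets_flip[OF n fs flip_right_state(1)[OF adm i R] _ C12
          flip_right_state(3)[OF adm i R]]) (rule flip_right_state(2)[OF adm i R])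
    then show ?thesis by blast
  next
    case False
    with central have L: "J (Suc i) = ToLeft" by (simp add: central_def)
    have "S \<inter> edge_at ` ({i} \<times> {TA1, TA2, C12}) \<noteq> {}"
      by (rule forcing_set_meets_flip[OF n fs flip_left_state(1)[OF adm i L] _ C12
          flip_left_state(3)[OF adm i L]]) (rule flip_left_state(2)[OF adm i L])
    then show ?thesis by blast
  qed
qed

lemma forcing_set_fragment_bound:
  assumes n: "0 < n" and adm: "admissible n (J, t, b)" and i: "i < n"
    and fs: "forcing_set (pyrene_V n) (pyrene_E n) (matching_of n (J, t, b)) S"
  shows "(if central (J i) (J (Suc i)) then 1 else 2) \<le> card (S \<inter> edge_at ` ({i} \<times> UNIV))"
    (is "_ \<le> card (S \<inter> ?F)")
proof -
  have "finite S"
    using fs finite_matching_of by (rule finite_forcing_set)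
  show ?thesis
  proof (cases "central (J i) (J (Suc i))")
    case False
    obtain e1 e2 where e1: "e1 \<in> S" "e1 \<in> edge_at ` top_hexagon i"
      and e2: "e2 \<in> S" "e2 \<in> edge_at ` bottom_hexagon i"
      using forcing_set_meets_hexagons[OF n adm i fs False] by blast
    have "e1 \<noteq> e2"
      using e1(2) e2(2) by (auto simp: top_hexagon_def bottom_hexagon_def edge_at_eq_iff)
    moreover have "{e1, e2} \<subseteq> S \<inter> ?F"
      using e1 e2 by (auto simp: top_hexagon_def bottom_hexagon_def)
    ultimately have "2 \<le> card (S \<inter> ?F)"
      using \<open>finite S\<close> card_mono[of "S \<inter> ?F" "{e1, e2}"] by simp
    then show ?thesis using False by simp
  next
    case True
    then have "1 \<le> card (S \<inter> ?F)"
      using forcing_set_meets_central[OF n adm i fs] \<open>finite S\<close> by (simp add: Suc_le_eq card_gt_0_iff)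
    then show ?thesis using True by simp
  qed
qed

lemma forcing_weight_le_card:
  assumes n: "0 < n" and adm: "admissible n w"
    and fs: "forcing_set (pyrene_V n) (pyrene_E n) (matching_of n w) S"
  shows "forcing_weight n w \<le> card S"
proof -
  obtain J t b where w: "w = (J, t, b)" by (cases w)
  define F where "F i = S \<inter> edge_at ` ({i} \<times> UNIV)" for i
  have "finite S"
    using fs finite_matching_of by (rule finite_forcing_set)
  have "forcing_weight n w = (\<Sum>i<n. if central (J i) (J (Suc i)) then 1 else 2)"
    by (simp add: w)
  also have "\<dots> \<le> (\<Sum>i<n. card (F i))"
  proof (rule sum_mono)
    fix i assume "i \<in> {..<n}"
    then show "(if central (J i) (J (Suc i)) then 1 else 2) \<le> card (F i)"
      unfolding F_def using forcing_set_fragment_bound[OF n, of J t b i S] adm fs w by simp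
  qed
  also have "\<dots> = card (\<Union>i<n. F i)"
    using \<open>finite S\<close> by (intro card_UN_disjoint[symmetric]) (auto simp: F_def edge_at_eq_iff)
  also have "\<dots> \<le> card S"
    using \<open>finite S\<close> by (intro card_mono) (auto simp: F_def)
  finally show ?thesis .
qed

lemma forcing_number_matching_of:
  assumes n: "0 < n" and adm: "admissible n w" and norm: "normalized n w"
  shows "forcing_number (pyrene_V n) (pyrene_E n) (matching_of n w) = forcing_weight n w"
  unfolding forcing_number_def
proof (rule Min_eqI)
  have "{S. forcing_set (pyrene_V n) (pyrene_E n) (matching_of n w) S} \<subseteq> Pow (matching_of n w)"
    by (auto simp: forcing_set_def)
  then show "finite (card ` {S. forcing_set (pyrene_V n) (pyrene_E n) (matching_of n w) S})"
    using finite_matching_of by (meson finite_Pow_iff finite_imageI finite_subset)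
  show "forcing_weight n w \<le> y"
    if "y \<in> card ` {S. forcing_set (pyrene_V n) (pyrene_E n) (matching_of n w) S}" for y
    using that forcing_weight_le_card[OF n adm] by auto
  show "forcing_weight n w \<in> card ` {S. forcing_set (pyrene_V n) (pyrene_E n) (matching_of n w) S}"
    using key_set_forcing[OF n adm norm] card_key_set by (metis image_eqI mem_Collect_eq)
qed

section \<open>The transfer recursion\<close>

lemma all_gt_Suc_iff: "(\<forall>i>Suc n. P i) \<longleftrightarrow> (\<forall>i>n. P (Suc i))"
  by (metis Suc_lessE Suc_less_eq)

lemma all_ge_Suc_iff: "(\<forall>i\<ge>Suc n. P i) \<longleftrightarrow> (\<forall>i\<ge>n. P (Suc i))"
  by (metis Suc_le_D Suc_le_mono)

definition configs :: "nat \<Rightarrow> vstate \<Rightarrow> config set" where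
  "configs n s = {(J, t, b). J 0 = s \<and> (J n = Vertical \<or> J n = ToLeft) \<and>
     (\<forall>i<n. compatible (J i) (t i) (b i) (J (Suc i))) \<and> normalized n (J, t, b)}"

definition config_poly :: "nat \<Rightarrow> vstate \<Rightarrow> int poly" where
  "config_poly n s = (\<Sum>w\<in>configs n s. monom 1 (forcing_weight n w))"

definition successors :: "vstate \<Rightarrow> (vstate \<times> bool \<times> bool) set" where
  "successors s = {(s', t0, b0). compatible s t0 b0 s'}"

fun cons_config :: "vstate \<Rightarrow> bool \<Rightarrow> bool \<Rightarrow> config \<Rightarrow> config" where
  "cons_config s t0 b0 (J, t, b) = (case_nat s J, case_nat t0 t, case_nat b0 b)"

lemma cons_config_in_configs_iff:
  "cons_config s t0 b0 (J, t, b) \<in> configs (Suc n) s \<longleftrightarrow>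
    (J 0, t0, b0) \<in> successors s \<and> (J, t, b) \<in> configs n (J 0)"
  by (auto simp: configs_def successors_def All_less_Suc2 all_gt_Suc_iff all_ge_Suc_iff)

lemma configs_Suc: "configs (Suc n) s =
  (\<lambda>((s', t0, b0), w). cons_config s t0 b0 w) ` (SIGMA x:successors s. configs n (fst x))"
proof (intro equalityI subsetI)
  fix w assume w: "w \<in> configs (Suc n) s"
  obtain J t b where Jtb: "w = (J, t, b)" by (cases w)
  let ?tail = "(\<lambda>i. J (Suc i), \<lambda>i. t (Suc i), \<lambda>i. b (Suc i))"
  have "J 0 = s" using w Jtb by (simp add: configs_def)
  then have "w = cons_config s (t 0) (b 0) ?tail"
    by (auto simp: Jtb fun_eq_iff split: nat.split)
  moreover from this have "((J 1, t 0, b 0), ?tail) \<in> (SIGMA x:successors s. configs n (fst x))"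
    using w cons_config_in_configs_iff[of s "t 0" "b 0" "\<lambda>i. J (Suc i)"] by simp
  ultimately show "w \<in> (\<lambda>((s', t0, b0), w). cons_config s t0 b0 w) ` (SIGMA x:successors s. configs n (fst x))"
    by (auto intro!: image_eqI)
next
  fix w assume "w \<in> (\<lambda>((s', t0, b0), w). cons_config s t0 b0 w) ` (SIGMA x:successors s. configs n (fst x))"
  then obtain s' t0 b0 J t b where w: "w = cons_config s t0 b0 (J, t, b)"
    and succ: "(s', t0, b0) \<in> successors s" and Jtb: "(J, t, b) \<in> configs n s'"
    by auto
  moreover from Jtb have "J 0 = s'" by (simp add: configs_def)
  ultimately show "w \<in> configs (Suc n) s"
    using cons_config_in_configs_iff[of s t0 b0 J t b n] by simp
qed

lemma inj_on_cons_config: "inj_on (\<lambda>((s', t0, b0), w). cons_config s t0 b0 w)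
  (SIGMA x:successors s. configs n (fst x))"
proof (rule inj_onI)
  fix x y assume x: "x \<in> (SIGMA x:successors s. configs n (fst x))"
    and y: "y \<in> (SIGMA x:successors s. configs n (fst x))"
    and eq: "(\<lambda>((s', t0, b0), w). cons_config s t0 b0 w) x = (\<lambda>((s', t0, b0), w). cons_config s t0 b0 w) y"
  obtain s1 t1 b1 J t b where x': "x = ((s1, t1, b1), (J, t, b))" by (cases x) auto
  obtain s2 t2 b2 J' t' b' where y': "y = ((s2, t2, b2), (J', t', b'))" by (cases y) auto
  have "J 0 = s1" "J' 0 = s2" using x y x' y' by (simp_all add: configs_def)
  moreover have "J = J'" "t = t'" "b = b'" "t1 = t2" "b1 = b2"
    using eq x' y' by (auto simp: fun_eq_iff dest: spec[of _ "Suc _"] spec[of _ 0])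
  ultimately show "x = y" using x' y' by simp
qed

lemma forcing_weight_cons_config:
  "w \<in> configs n s' \<Longrightarrow>
    forcing_weight (Suc n) (cons_config s t0 b0 w) = (if central s s' then 1 else 2) + forcing_weight n w"
  by (cases w) (simp add: configs_def sum.lessThan_Suc_shift del: sum.lessThan_Suc)

lemma UNIV_vstate: "(UNIV :: vstate set) = {Vertical, ToLeft, ToRight}"
  by (rule set_eqI, case_tac x) auto

instance vstate :: finite
  by standard (simp add: UNIV_vstate)

lemma finite_configs: "finite (configs n s)"
proof (induction n arbitrary: s)
  case 0
  have "configs 0 s \<subseteq> {(\<lambda>i. if i = 0 then s else Vertical, \<lambda>_. False, \<lambda>_. False)}"
    by (auto simp: configs_def fun_eq_iff)
  then show ?case by (rule finite_subset) simp
next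
  case (Suc n)
  show ?case unfolding configs_Suc by (intro finite_imageI finite_SigmaI) (simp_all add: Suc)
qed

lemma config_poly_Suc: "config_poly (Suc n) s =
  (\<Sum>(s', t0, b0)\<in>successors s. monom 1 (if central s s' then 1 else 2) * config_poly n s')"
proof -
  have "config_poly (Suc n) s =
      (\<Sum>(x, w)\<in>(SIGMA x:successors s. configs n (fst x)).
        monom 1 (forcing_weight (Suc n) (cons_config s (fst (snd x)) (snd (snd x)) w)))"
    unfolding config_poly_def configs_Suc
    by (subst sum.reindex[OF inj_on_cons_config]) (simp add: case_prod_beta)
  also have "\<dots> = (\<Sum>x\<in>successors s. \<Sum>w\<in>configs n (fst x).
      monom 1 (if central s (fst x) then 1 else 2) * monom 1 (forcing_weight n w))"
    by (subst sum.Sigma[symmetric]) (auto simp: finite_configs forcing_weight_cons_config mult_monom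
        intro!: sum.cong finite_subset[of _ UNIV])
  also have "\<dots> = (\<Sum>(s', t0, b0)\<in>successors s. monom 1 (if central s s' then 1 else 2) * config_poly n s')"
    by (simp add: config_poly_def sum_distrib_left case_prod_beta)
  finally show ?thesis .
qed

lemma successors_Vertical: "successors Vertical =
  {(Vertical, False, False), (Vertical, False, True), (Vertical, True, False), (Vertical, True, True),
   (ToLeft, False, False),
   (ToRight, False, False), (ToRight, False, True), (ToRight, True, False), (ToRight, True, True)}"
  unfolding successors_def compatible_def central_def
  by (rule set_eqI, case_tac x, case_tac a) auto

lemma successors_ToLeft: "successors ToLeft = successors Vertical"
  by (simp add: successors_def compatible_def central_def)

lemma successors_ToRight: "successors ToRight = {(Vertical, False, False), (ToRight, False, False)}"
  unfolding successors_def compatible_def central_def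
  by (rule set_eqI, case_tac x, case_tac a) auto

lemma config_poly_0: "config_poly 0 Vertical = 1" "config_poly 0 ToLeft = 1" "config_poly 0 ToRight = 0"
proof -
  have "configs 0 s = {(\<lambda>i. if i = 0 then s else Vertical, \<lambda>_. False, \<lambda>_. False)}"
    if "s \<noteq> ToRight" for s
    using that by (auto simp: configs_def fun_eq_iff) (cases s; simp)
  moreover have "configs 0 ToRight = {}"
    by (auto simp: configs_def)
  ultimately show "config_poly 0 Vertical = 1" "config_poly 0 ToLeft = 1" "config_poly 0 ToRight = 0"
    by (simp_all add: config_poly_def)
qed

lemma config_poly_ToLeft: "config_poly n ToLeft = config_poly n Vertical"
  by (cases n) (simp_all add: config_poly_0 config_poly_Suc successors_ToLeft central_def)

lemma config_poly_Suc_Vertical: "config_poly (Suc n) Vertical =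
  ([:0, 1:] + 4 * [:0, 1:] ^ 2) * config_poly n Vertical + 4 * [:0, 1:] ^ 2 * config_poly n ToRight"
  unfolding config_poly_Suc successors_Vertical
  by (simp add: central_def config_poly_ToLeft monom_altdef algebra_simps)

lemma config_poly_Suc_ToRight: "config_poly (Suc n) ToRight =
  [:0, 1:] * config_poly n Vertical + [:0, 1:] * config_poly n ToRight"
  unfolding config_poly_Suc successors_ToRight
  by (simp add: central_def monom_altdef algebra_simps)

definition pyrene_poly :: "nat \<Rightarrow> int poly" where
  "pyrene_poly n = config_poly n Vertical + config_poly n ToRight"

lemma pyrene_poly_0: "pyrene_poly 0 = 1"
  by (simp add: pyrene_poly_def config_poly_0)

lemma pyrene_poly_1: "pyrene_poly 1 = [:0, 1:] * [:2, 4:]"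
proof -
  have "[:2, 4:] = 2 + 4 * [:0, 1 :: int:]"
    by (simp add: numeral_poly)
  moreover have "pyrene_poly 1 = ([:0, 1:] + 4 * [:0, 1:] ^ 2) + [:0, 1:]"
    using config_poly_Suc_Vertical[of 0] config_poly_Suc_ToRight[of 0]
    by (simp add: pyrene_poly_def config_poly_0)
  ultimately show ?thesis by algebra
qed

lemma pyrene_poly_Suc_Suc: "pyrene_poly (Suc (Suc n)) =
  [:0, 1:] * [:2, 4:] * pyrene_poly (Suc n) - [:0, 1:] ^ 2 * pyrene_poly n"
proof -
  have "[:2, 4:] = 2 + 4 * [:0, 1 :: int:]"
    by (simp add: numeral_poly)
  then show ?thesis
    unfolding pyrene_poly_def config_poly_Suc_Vertical config_poly_Suc_ToRight by algebra
qed

lemma forcing_polynomial_pyrene_0: "forcing_polynomial (pyrene_V 0) (pyrene_E 0) = 1"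
proof -
  have V: "pyrene_V 0 = {}" and E: "pyrene_E 0 = {}"
    by (simp_all add: pyrene_V_def pyrene_E_def pyrene_centres_def)
  have PM: "perfect_matchings {} {} = {{}}"
    by (auto simp: perfect_matchings_def perfect_matching_def)
  have FS: "{S. forcing_set {} {} {} S} = {{}}"
    by (auto simp: forcing_set_def perfect_matching_def)
  show ?thesis
    unfolding V E forcing_polynomial_def PM by (simp add: forcing_number_def FS)
qed

lemma perfect_matchings_pyrene:
  assumes n: "0 < n"
  shows "perfect_matchings (pyrene_V n) (pyrene_E n) = matching_of n ` {w. admissible n w \<and> normalized n w}"
proof (intro equalityI subsetI)
  fix M assume "M \<in> perfect_matchings (pyrene_V n) (pyrene_E n)"
  then have "perfect_matching (pyrene_V n) (pyrene_E n) M"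
    by (simp add: perfect_matchings_def)
  then obtain w where "admissible n w" "normalized n w" "M = matching_of n w"
    using perfect_matching_config[OF n] by blast
  then show "M \<in> matching_of n ` {w. admissible n w \<and> normalized n w}"
    by blast
next
  fix M assume "M \<in> matching_of n ` {w. admissible n w \<and> normalized n w}"
  then show "M \<in> perfect_matchings (pyrene_V n) (pyrene_E n)"
    using admissible_perfect_matching[OF n] by (auto simp: perfect_matchings_def)
qed

lemma forcing_polynomial_pyrene_poly:
  assumes n: "0 < n"
  shows "forcing_polynomial (pyrene_V n) (pyrene_E n) = pyrene_poly n"
proof -
  define W where "W = {w. admissible n w \<and> normalized n w}"
  have "forcing_polynomial (pyrene_V n) (pyrene_E n) =
      (\<Sum>w\<in>W. monom 1 (forcing_number (pyrene_V n) (pyrene_E n) (matching_of n w)))"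
    unfolding forcing_polynomial_def perfect_matchings_pyrene[OF n] W_def
    by (simp add: sum.reindex[OF inj_on_matching_of])
  also have "\<dots> = (\<Sum>w\<in>W. monom 1 (forcing_weight n w))"
    by (rule sum.cong) (simp_all add: W_def forcing_number_matching_of[OF n])
  also have "W = configs n Vertical \<union> configs n ToRight"
    by (auto simp: W_def configs_def)
  also have "(\<Sum>w\<in>configs n Vertical \<union> configs n ToRight. monom 1 (forcing_weight n w)) = pyrene_poly n"
    unfolding pyrene_poly_def config_poly_def
    by (rule sum.union_disjoint) (simp_all add: finite_configs, auto simp: configs_def)
  finally show ?thesis .
qed

section \<open>Chebyshev polynomials\<close>

(* chebyshev_U y n = U_n(y / 2) for the Chebyshev polynomial U_n of the second kind. *)
definition chebyshev_U_term :: "'a::comm_ring_1 \<Rightarrow> nat \<Rightarrow> nat \<Rightarrow> 'a" where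
  "chebyshev_U_term y n k = (-1) ^ k * of_nat ((n - k) choose k) * y ^ (n - 2 * k)"

definition chebyshev_U :: "'a::comm_ring_1 \<Rightarrow> nat \<Rightarrow> 'a" where
  "chebyshev_U y n = (\<Sum>k\<le>n. chebyshev_U_term y n k)"

lemma chebyshev_U_term_eq_0: "n < 2 * k \<Longrightarrow> chebyshev_U_term y n k = 0"
  by (simp add: chebyshev_U_term_def binomial_eq_0)

lemma chebyshev_U_term_Suc_Suc:
  assumes "k \<le> Suc n"
  shows "chebyshev_U_term y (Suc (Suc n)) (Suc k) =
    y * chebyshev_U_term y (Suc n) (Suc k) - chebyshev_U_term y n k"
proof -
  have pascal: "(Suc n - k) choose Suc k = ((n - k) choose Suc k) + ((n - k) choose k)"
    using assms by (cases "k = Suc n") (simp_all add: Suc_diff_le)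
  have index: "Suc (Suc n) - Suc k = Suc n - k" "Suc (Suc n) - 2 * Suc k = n - 2 * k"
    "Suc n - Suc k = n - k" "Suc n - 2 * Suc k = n - Suc (2 * k)"
    by simp_all
  show ?thesis
  proof (cases "Suc (2 * k) \<le> n")
    case True
    then have "y ^ (n - 2 * k) = y * y ^ (n - Suc (2 * k))"
      by (simp flip: power_Suc add: Suc_diff_Suc)
    then show ?thesis
      unfolding chebyshev_U_term_def index pascal by (simp add: algebra_simps)
  next
    case False
    then have zero: "(n - k) choose Suc k = 0" by (simp add: binomial_eq_0)
    show ?thesis
      unfolding chebyshev_U_term_def index pascal zero by simp
  qed
qed

lemma chebyshev_U_Suc_Suc:
  "chebyshev_U y (Suc (Suc n)) = y * chebyshev_U y (Suc n) - chebyshev_U y n"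
proof -
  let ?T = "chebyshev_U_term y"
  have "?T (Suc (Suc n)) 0 = y * ?T (Suc n) 0"
    by (simp add: chebyshev_U_term_def)
  then have "chebyshev_U y (Suc (Suc n)) =
      (y * ?T (Suc n) 0 + (\<Sum>k\<le>Suc n. y * ?T (Suc n) (Suc k))) - (\<Sum>k\<le>Suc n. ?T n k)"
    unfolding chebyshev_U_def sum.atMost_Suc_shift[of "?T (Suc (Suc n))"]
    by (simp add: chebyshev_U_term_Suc_Suc sum_subtractf)
  also have "(\<Sum>k\<le>Suc n. ?T n k) = chebyshev_U y n"
    by (simp add: chebyshev_U_def chebyshev_U_term_eq_0)
  also have "y * ?T (Suc n) 0 + (\<Sum>k\<le>Suc n. y * ?T (Suc n) (Suc k)) = y * chebyshev_U y (Suc n)"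
    unfolding chebyshev_U_def sum.atMost_Suc_shift[of "?T (Suc n)" n]
    by (simp add: distrib_left sum_distrib_left chebyshev_U_term_eq_0)
  finally show ?thesis .
qed

lemma scaled_chebyshev_U:
  fixes u :: "nat \<Rightarrow> 'a::comm_ring_1"
  assumes "u 0 = 1" and "u 1 = x * y"
    and "\<And>n. u (Suc (Suc n)) = x * y * u (Suc n) - x ^ 2 * u n"
  shows "u n = x ^ n * chebyshev_U y n"
proof -
  have "u n = x ^ n * chebyshev_U y n \<and> u (Suc n) = x ^ Suc n * chebyshev_U y (Suc n)"
  proof (induction n)
    case (Suc n)
    then show ?case
      by (simp add: assms(3) chebyshev_U_Suc_Suc algebra_simps power2_eq_square)
  qed (simp add: assms(1) assms(2)[unfolded One_nat_def] chebyshev_U_def chebyshev_U_term_def)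
  then show ?thesis ..
qed

lemma linear_poly_power:
  fixes a b :: "'a::comm_semiring_1"
  shows "[:a, b:] ^ m = (\<Sum>j\<le>m. monom (of_nat (m choose j) * a ^ (m - j) * b ^ j) j)"
proof -
  have "[:a, b:] = monom b 1 + [:a:]"
    by (simp add: monom_Suc monom_0)
  then have "[:a, b:] ^ m = (\<Sum>j\<le>m. of_nat (m choose j) * monom b 1 ^ j * [:a:] ^ (m - j))"
    by (simp add: binomial_ring)
  also have "\<dots> = (\<Sum>j\<le>m. monom (of_nat (m choose j) * a ^ (m - j) * b ^ j) j)"
    by (simp add: monom_power of_nat_poly poly_const_pow smult_monom mult_ac)
  finally show ?thesis .
qed

lemma chebyshev_U_reversed:
  "chebyshev_U y n = (\<Sum>i\<le>n. of_int ((-1) ^ (n - i) * int (i choose (n - i))) * y ^ (2 * i - n))"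
proof -
  have "chebyshev_U y n = (\<Sum>i\<le>n. chebyshev_U_term y n (n - i))"
    unfolding chebyshev_U_def atLeast0AtMost[symmetric]
    by (subst sum.atLeastAtMost_rev) simp
  also have "\<dots> = (\<Sum>i\<le>n. of_int ((-1) ^ (n - i) * int (i choose (n - i))) * y ^ (2 * i - n))"
  proof (intro sum.cong refl)
    fix i assume "i \<in> {..n}"
    then have "n - (n - i) = i" "n - 2 * (n - i) = 2 * i - n" by auto
    then show "chebyshev_U_term y n (n - i) = of_int ((-1) ^ (n - i) * int (i choose (n - i))) * y ^ (2 * i - n)"
      by (simp add: chebyshev_U_term_def)
  qed
  finally show ?thesis .
qed

lemma power_pCons_2_4: "[:2, 4:] ^ m = (\<Sum>j\<le>m. monom (2 ^ (m + j) * int (m choose j)) j)"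
  unfolding linear_poly_power
proof (rule sum.cong[OF refl])
  fix j assume "j \<in> {..m}"
  then have "(2 :: int) ^ (m - j) * 2 ^ (2 * j) = 2 ^ (m + j)"
    by (simp flip: power_add)
  then have "of_nat (m choose j) * 2 ^ (m - j) * 4 ^ j = 2 ^ (m + j) * int (m choose j)"
    by (simp add: power_mult)
  then show "monom (of_nat (m choose j) * 2 ^ (m - j) * 4 ^ j) j = monom (2 ^ (m + j) * int (m choose j)) j"
    by simp
qed

lemma chebyshev_U_2_4_coefficients:
  "chebyshev_U [:2, 4:] n = (\<Sum>j = 0..n. \<Sum>i = (j + n + 1) div 2..n.
    monom ((-1) ^ (n - i) * 2 ^ (2 * i + j - n) * int (i choose (n - i)) * int ((2 * i - n) choose j)) j)"
proof -
  define c where "c i = (-1) ^ (n - i) * int (i choose (n - i))" for i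
  define g where "g i j = monom ((-1) ^ (n - i) * 2 ^ (2 * i + j - n) * int (i choose (n - i))
    * int ((2 * i - n) choose j)) j" for i j
  have "(\<Sum>j = 0..n. \<Sum>i = (j + n + 1) div 2..n. g i j) =
      (\<Sum>j\<in>{0..n}. \<Sum>i\<in>{i. i \<in> {0..n} \<and> (j + n + 1) div 2 \<le> i}. g i j)"
    by (intro sum.cong) auto
  also have "\<dots> = (\<Sum>i\<in>{0..n}. \<Sum>j\<in>{j. j \<in> {0..n} \<and> (j + n + 1) div 2 \<le> i}. g i j)"
    by (rule sum.swap_restrict) auto
  also have "\<dots> = (\<Sum>i\<le>n. of_int (c i) * [:2, 4:] ^ (2 * i - n))"
    unfolding atLeast0AtMost
  proof (rule sum.cong[OF refl])
    fix i assume "i \<in> {..n}"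
    show "(\<Sum>j\<in>{j. j \<in> {..n} \<and> (j + n + 1) div 2 \<le> i}. g i j) = of_int (c i) * [:2, 4:] ^ (2 * i - n)"
    proof (cases "n \<le> 2 * i")
      case True
      with \<open>i \<in> {..n}\<close> have "{j. j \<in> {..n} \<and> (j + n + 1) div 2 \<le> i} = {..2 * i - n}" by auto
      moreover have "g i j = monom (c i * (2 ^ (2 * i - n + j) * int ((2 * i - n) choose j))) j" for j
        using True by (simp add: g_def c_def mult_ac)
      ultimately show ?thesis
        by (simp add: power_pCons_2_4 sum_distrib_left of_int_poly smult_monom)
    next
      case False
      then have empty: "{j. j \<in> {..n} \<and> (j + n + 1) div 2 \<le> i} = {}" and "c i = 0"
        by (auto simp: c_def binomial_eq_0)
      then show ?thesis unfolding empty by simp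
    qed
  qed
  also have "\<dots> = chebyshev_U [:2, 4:] n"
    by (simp add: chebyshev_U_reversed c_def)
  finally show ?thesis unfolding g_def ..
qed

theorem theorem3p2:
  fixes n :: nat
  shows "forcing_polynomial (pyrene_V n) (pyrene_E n) =
    monom 1 n * (\<Sum>j = 0..n. \<Sum>i = (j + n + 1) div 2..n.
      monom ((-1) ^ (n - i) * 2 ^ (2 * i + j - n) * int (i choose (n - i))
             * int ((2 * i - n) choose j)) j)"
proof -
  have "forcing_polynomial (pyrene_V n) (pyrene_E n) = pyrene_poly n"
    by (cases "n = 0") (simp_all add: forcing_polynomial_pyrene_0 pyrene_poly_0 forcing_polynomial_pyrene_poly)
  also have "\<dots> = [:0, 1:] ^ n * chebyshev_U [:2, 4:] n"
    by (rule scaled_chebyshev_U[where u = pyrene_poly, OF pyrene_poly_0 pyrene_poly_1 pyrene_poly_Suc_Suc])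
  also have "\<dots> = monom 1 n * chebyshev_U [:2, 4:] n"
    by (simp add: monom_altdef)
  finally show ?thesis
    by (simp only: chebyshev_U_2_4_coefficients)
qed

end
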